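(* Let $G$ and $H$ be nontrivial finite connected simple graphs and let $\ell\geq 1$ be an integer. (1) If $S$ is an $\ell$-solid-resolving set of $G\Box H$, then the projection of $S$ onto $G$ is an $\ell$-solid-resolving set of $G$, and the projection of $S$ onto $H$ is an $\ell$-solid-resolving set of $H$. (2) If $T$ is an $\ell$-solid-resolving set of $G$ and $U$ is an $\ell$-solid-resolving set of $H$, then $T\times U=\{tu: t\in T,u\in U\}$ is an $\ell$-solid-resolving set of $G\Box H$. (3) $\max\{\beta_\ell^s(G),\beta_\ell^s(H)\}\leq \beta_\ell^s(G\Box H)\leq \beta_\ell^s(G)\cdot\beta_\ell^s(H)$.
   Context: The Cartesian product $G\Box H$ has vertex set $\{av: a\in V(G), v\in V(H)\}$, with distinct $av,bu$ adjacent iff ($a=b$ and $uv\in E(H)$) or ($ab\in E(G)$ and $u=v$). The projection of $X\subseteq V(G\Box H)$ onto $G$ is $\{x_1: x_1x_2\in X\}$, and onto $H$ is $\{x_2: x_1x_2\in X\}$. For a graph, $d$ is the shortest-path distance, $d(s,X)=\min_{x\in X}d(s,x)$ for nonempty $X$, and $\mathcal{D}_S(X)=(d(s_1,X),\dots,d(s_k,X))$ for $S=\{s_1,\dots,s_k\}$. $S$ is an $\ell$-solid-resolving set if $\mathcal{D}_S(X)\neq\mathcal{D}_S(Y)$ for all distinct nonempty vertex sets $X,Y$ with $|X|\leq\ell$ ($Y$ arbitrary); $\beta_\ell^s$ is the minimum size of such a set. *)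

theory Defs
  imports Main
begin

definition simple_graph :: "'a set \<Rightarrow> ('a \<Rightarrow> 'a \<Rightarrow> bool) \<Rightarrow> bool" where
  "simple_graph V E \<longleftrightarrow> finite V \<and> (\<forall>x y. E x y \<longrightarrow> x \<in> V \<and> y \<in> V)
     \<and> (\<forall>x y. E x y \<longrightarrow> E y x) \<and> (\<forall>x. \<not> E x x)"

fun walk :: "('a \<Rightarrow> 'a \<Rightarrow> bool) \<Rightarrow> nat \<Rightarrow> 'a \<Rightarrow> 'a \<Rightarrow> bool" where
  "walk E 0 x y \<longleftrightarrow> x = y"
| "walk E (Suc n) x y \<longleftrightarrow> (\<exists>z. E x z \<and> walk E n z y)"

definition connected_graph :: "'a set \<Rightarrow> ('a \<Rightarrow> 'a \<Rightarrow> bool) \<Rightarrow> bool" where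
  "connected_graph V E \<longleftrightarrow> V \<noteq> {} \<and> (\<forall>x\<in>V. \<forall>y\<in>V. \<exists>n. walk E n x y)"

definition gdist :: "('a \<Rightarrow> 'a \<Rightarrow> bool) \<Rightarrow> 'a \<Rightarrow> 'a \<Rightarrow> nat" where
  "gdist E x y = (LEAST n. walk E n x y)"

definition setdist :: "('a \<Rightarrow> 'a \<Rightarrow> bool) \<Rightarrow> 'a \<Rightarrow> 'a set \<Rightarrow> nat" where
  "setdist E s X = Min (gdist E s ` X)"

definition solid_resolving :: "nat \<Rightarrow> 'a set \<Rightarrow> ('a \<Rightarrow> 'a \<Rightarrow> bool) \<Rightarrow> 'a set \<Rightarrow> bool" where
  "solid_resolving l V E S \<longleftrightarrow> S \<subseteq> V \<and>
     (\<forall>X Y. X \<subseteq> V \<and> Y \<subseteq> V \<and> X \<noteq> {} \<and> Y \<noteq> {} \<and> X \<noteq> Y \<and> card X \<le> l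
        \<longrightarrow> (\<exists>s\<in>S. setdist E s X \<noteq> setdist E s Y))"

definition solid_dim :: "nat \<Rightarrow> 'a set \<Rightarrow> ('a \<Rightarrow> 'a \<Rightarrow> bool) \<Rightarrow> nat" where
  "solid_dim l V E = (LEAST k. \<exists>S. solid_resolving l V E S \<and> card S = k)"

definition cart_edge :: "('a \<Rightarrow> 'a \<Rightarrow> bool) \<Rightarrow> ('b \<Rightarrow> 'b \<Rightarrow> bool) \<Rightarrow> ('a \<times> 'b) \<Rightarrow> ('a \<times> 'b) \<Rightarrow> bool" where
  "cart_edge EG EH p q \<longleftrightarrow> p \<noteq> q \<and>
     ((fst p = fst q \<and> EH (snd p) (snd q)) \<or> (EG (fst p) (fst q) \<and> snd p = snd q))"

end

theory Submission
  imports Defs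
begin

text \<open>Because a superset of a set \<open>X\<close> has minimal distance at most that of \<open>X\<close>, a set \<open>S\<close> is
  \<open>\<ell>\<close>-solid-resolving iff for every \<open>X\<close> with \<open>|X| \<le> \<ell>\<close> and every vertex \<open>x \<notin> X\<close> some \<open>s \<in> S\<close> is
  strictly closer to \<open>x\<close> than to all of \<open>X\<close>. In \<open>G \<box> H\<close> distances add up coordinatewise.
  Hence a vertex of \<open>S\<close> separating a copy \<open>X \<times> {v}\<close> of \<open>X\<close> from \<open>(x, v)\<close> projects to a vertex
  separating \<open>X\<close> from \<open>x\<close> in \<open>G\<close>; conversely \<open>(t, u)\<close> separates \<open>X\<close> from \<open>(x, y)\<close> in \<open>G \<box> H\<close> as
  soon as \<open>t\<close> separates the first and \<open>u\<close> the second coordinates of \<open>X\<close> (other than \<open>x\<close>, resp.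
  \<open>y\<close>) from \<open>x\<close>, resp. \<open>y\<close>.\<close>

lemma Min_image_neq_if_strictly_below:
  fixes f :: "'v \<Rightarrow> 'b::linorder"
  assumes "finite X" "X \<noteq> {}" "finite Y" "y \<in> Y" "\<forall>x\<in>X. f y < f x"
  shows "Min (f ` X) \<noteq> Min (f ` Y)"
proof -
  have "Min (f ` Y) \<le> f y" using assms(3,4) by simp
  also have "f y < Min (f ` X)" using assms(1,2,5) by simp
  finally show ?thesis by simp
qed

lemma strictly_below_if_Min_image_insert_neq:
  fixes f :: "'v \<Rightarrow> 'b::linorder"
  assumes "finite X" "X \<noteq> {}" "Min (f ` X) \<noteq> Min (f ` insert x X)"
  shows "\<forall>y\<in>X. f x < f y"
proof -
  have "Min (f ` insert x X) = min (f x) (Min (f ` X))" using assms(1,2) by simp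
  then have "f x < Min (f ` X)" using assms(3) by (simp add: min_def split: if_splits)
  then show ?thesis using assms(1,2) by simp
qed

lemma solid_resolving_iff_strictly_closer:
  assumes "finite V"
  shows "solid_resolving l V E S \<longleftrightarrow> S \<subseteq> V \<and>
    (\<forall>X x. X \<subseteq> V \<and> X \<noteq> {} \<and> card X \<le> l \<and> x \<in> V \<and> x \<notin> X
       \<longrightarrow> (\<exists>s\<in>S. \<forall>y\<in>X. gdist E s x < gdist E s y))"
    (is "_ \<longleftrightarrow> _ \<and> ?closer")
proof -
  have finite_subsets: "finite X" if "X \<subseteq> V" for X
    using assms that by (rule finite_subset[rotated])
  have "(\<forall>X Y. X \<subseteq> V \<and> Y \<subseteq> V \<and> X \<noteq> {} \<and> Y \<noteq> {} \<and> X \<noteq> Y \<and> card X \<le> l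
          \<longrightarrow> (\<exists>s\<in>S. setdist E s X \<noteq> setdist E s Y)) \<longleftrightarrow> ?closer" (is "?distinct \<longleftrightarrow> _")
  proof
    assume ?distinct
    show ?closer
    proof (intro allI impI)
      fix X x assume X: "X \<subseteq> V \<and> X \<noteq> {} \<and> card X \<le> l \<and> x \<in> V \<and> x \<notin> X"
      have "\<exists>s\<in>S. setdist E s X \<noteq> setdist E s (insert x X)"
        by (rule \<open>?distinct\<close>[rule_format]) (use X in auto)
      then obtain s where s: "s \<in> S" "Min (gdist E s ` X) \<noteq> Min (gdist E s ` insert x X)"
        unfolding setdist_def by blast
      then have "\<forall>y\<in>X. gdist E s x < gdist E s y"
        using strictly_below_if_Min_image_insert_neq[of X] finite_subsets X by blast
      then show "\<exists>s\<in>S. \<forall>y\<in>X. gdist E s x < gdist E s y" using s(1) by blast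
    qed
  next
    assume ?closer
    show ?distinct
    proof (intro allI impI)
      fix X Y assume XY: "X \<subseteq> V \<and> Y \<subseteq> V \<and> X \<noteq> {} \<and> Y \<noteq> {} \<and> X \<noteq> Y \<and> card X \<le> l"
      then have fin: "finite X" "finite Y" using finite_subsets by auto
      show "\<exists>s\<in>S. setdist E s X \<noteq> setdist E s Y"
      proof (cases "Y \<subseteq> X")
        case True
        then obtain x where x: "x \<in> X" "x \<notin> Y" using XY by blast
        have "card Y \<le> l" using card_mono[OF fin(1) True] XY by linarith
        then have "\<exists>s\<in>S. \<forall>y\<in>Y. gdist E s x < gdist E s y"
          by (intro \<open>?closer\<close>[rule_format]) (use XY x in auto)
        then obtain s where s: "s \<in> S" "\<forall>y\<in>Y. gdist E s x < gdist E s y" by blast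
        then have "Min (gdist E s ` X) \<noteq> Min (gdist E s ` Y)"
          using Min_image_neq_if_strictly_below[OF fin(2) _ fin(1) x(1)] XY s(2) by metis
        then show ?thesis using s(1) unfolding setdist_def by blast
      next
        case False
        then obtain y where y: "y \<in> Y" "y \<notin> X" by blast
        then have "\<exists>s\<in>S. \<forall>x\<in>X. gdist E s y < gdist E s x"
          by (intro \<open>?closer\<close>[rule_format]) (use XY in auto)
        then obtain s where s: "s \<in> S" "\<forall>x\<in>X. gdist E s y < gdist E s x" by blast
        then have "Min (gdist E s ` X) \<noteq> Min (gdist E s ` Y)"
          using Min_image_neq_if_strictly_below[OF fin(1) _ fin(2) y(1)] XY s(2) by blast
        then show ?thesis using s(1) unfolding setdist_def by auto
      qed
    qed
  qed
  then show ?thesis unfolding solid_resolving_def by blast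
qed

lemma solid_resolving_strictly_closer:
  assumes "finite V" "solid_resolving l V E S" "S \<noteq> {}"
    and "A \<subseteq> V" "card A \<le> l" "x \<in> V" "x \<notin> A"
  obtains s where "s \<in> S" "\<forall>y\<in>A. gdist E s x < gdist E s y"
proof (cases "A = {}")
  case True
  then show ?thesis using assms(3) that by blast
next
  case False
  then show ?thesis
    using assms(2,4-7) that unfolding solid_resolving_iff_strictly_closer[OF assms(1)] by blast
qed

lemma solid_resolving_nonempty:
  assumes "solid_resolving l V E S" "card V \<ge> 2" "l \<ge> 1"
  shows "S \<noteq> {}"
proof -
  have fin: "finite V" by (rule card_ge_0_finite) (use assms(2) in linarith)
  moreover have "\<not> card V \<le> Suc 0" using assms(2) by simp
  ultimately obtain x y where "x \<in> V" "y \<in> V" "x \<noteq> y"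
    using card_le_Suc0_iff_eq by blast
  then have "{y} \<subseteq> V \<and> {y} \<noteq> {} \<and> card {y} \<le> l \<and> x \<in> V \<and> x \<notin> {y}"
    using assms(3) by simp
  then have "\<exists>s\<in>S. \<forall>z\<in>{y}. gdist E s x < gdist E s z"
    using assms(1) unfolding solid_resolving_iff_strictly_closer[OF fin] by blast
  then show ?thesis by blast
qed

lemma simple_graph_finite: "simple_graph V E \<Longrightarrow> finite V"
  unfolding simple_graph_def by blast

lemma walk_append: "walk E m x y \<Longrightarrow> walk E n y z \<Longrightarrow> walk E (m + n) x z"
  by (induction m arbitrary: x) auto

lemma walk_cart_edge_split:
  "walk (cart_edge EG EH) n p q \<Longrightarrow>
     \<exists>n1 n2. n1 + n2 = n \<and> walk EG n1 (fst p) (fst q) \<and> walk EH n2 (snd p) (snd q)"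
proof (induction n arbitrary: p)
  case 0
  then show ?case by auto
next
  case (Suc n)
  then obtain z where z: "cart_edge EG EH p z" "walk (cart_edge EG EH) n z q" by auto
  then obtain n1 n2 where n: "n1 + n2 = n" "walk EG n1 (fst z) (fst q)" "walk EH n2 (snd z) (snd q)"
    using Suc.IH by blast
  consider "fst p = fst z" "EH (snd p) (snd z)" | "EG (fst p) (fst z)" "snd p = snd z"
    using z(1) unfolding cart_edge_def by blast
  then show ?case
  proof cases
    case 1
    then show ?thesis using n by (intro exI[of _ n1] exI[of _ "Suc n2"]) auto
  next
    case 2
    then show ?thesis using n by (intro exI[of _ "Suc n1"] exI[of _ n2]) auto
  qed
qed

lemma walk_cart_edge_fst:
  "(\<And>x. \<not> EG x x) \<Longrightarrow> walk EG n a c \<Longrightarrow> walk (cart_edge EG EH) n (a, b) (c, b)"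
  by (induction n arbitrary: a) (auto simp: cart_edge_def, metis)

lemma walk_cart_edge_snd:
  "(\<And>x. \<not> EH x x) \<Longrightarrow> walk EH n b d \<Longrightarrow> walk (cart_edge EG EH) n (a, b) (a, d)"
  by (induction n arbitrary: b) (auto simp: cart_edge_def, metis)

lemma walk_gdist:
  assumes "connected_graph V E" "x \<in> V" "y \<in> V"
  shows "walk E (gdist E x y) x y"
  using assms unfolding connected_graph_def gdist_def by (meson LeastI)

lemma gdist_le_walk: "walk E n x y \<Longrightarrow> gdist E x y \<le> n"
  unfolding gdist_def by (rule Least_le)

lemma gdist_self [simp]: "gdist E x x = 0"
  using gdist_le_walk[of E 0 x x] by simp

lemma gdist_pos:
  assumes "connected_graph V E" "x \<in> V" "y \<in> V" "x \<noteq> y"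
  shows "gdist E x y > 0"
  using walk_gdist[OF assms(1-3)] assms(4) by (cases "gdist E x y") auto

lemma gdist_cart_edge:
  assumes "simple_graph VG EG" "connected_graph VG EG"
    and "simple_graph VH EH" "connected_graph VH EH"
    and "a \<in> VG" "c \<in> VG" "b \<in> VH" "d \<in> VH"
  shows "gdist (cart_edge EG EH) (a, b) (c, d) = gdist EG a c + gdist EH b d"
  unfolding gdist_def[of "cart_edge EG EH"]
proof (rule Least_equality)
  have irrefl: "\<And>x. \<not> EG x x" "\<And>x. \<not> EH x x"
    using assms(1,3) unfolding simple_graph_def by blast+
  have "walk (cart_edge EG EH) (gdist EG a c) (a, b) (c, b)"
    using walk_cart_edge_fst[OF irrefl(1) walk_gdist[OF assms(2,5,6)]] .
  moreover have "walk (cart_edge EG EH) (gdist EH b d) (c, b) (c, d)"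
    using walk_cart_edge_snd[OF irrefl(2) walk_gdist[OF assms(4,7,8)]] .
  ultimately show "walk (cart_edge EG EH) (gdist EG a c + gdist EH b d) (a, b) (c, d)"
    by (rule walk_append)
next
  fix n assume "walk (cart_edge EG EH) n (a, b) (c, d)"
  then obtain n1 n2 where "n1 + n2 = n" "walk EG n1 a c" "walk EH n2 b d"
    using walk_cart_edge_split by fastforce
  then show "gdist EG a c + gdist EH b d \<le> n"
    using gdist_le_walk add_mono by metis
qed

lemma solid_resolving_vertex_set:
  assumes "finite V" "connected_graph V E"
  shows "solid_resolving l V E V"
  unfolding solid_resolving_iff_strictly_closer[OF assms(1)]
  using gdist_pos[OF assms(2)] by (metis gdist_self subset_iff subset_refl)

lemma solid_dim_le_card: "solid_resolving l V E S \<Longrightarrow> solid_dim l V E \<le> card S"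
  unfolding solid_dim_def by (rule Least_le) blast

lemma solid_dim_le_card_image:
  "solid_resolving l V E (f ` S) \<Longrightarrow> finite S \<Longrightarrow> solid_dim l V E \<le> card S"
  using solid_dim_le_card card_image_le le_trans by blast

lemma solid_dim_attained:
  assumes "solid_resolving l V E S"
  obtains S0 where "solid_resolving l V E S0" "card S0 = solid_dim l V E"
proof -
  have "\<exists>k S. solid_resolving l V E S \<and> card S = k" using assms by blast
  then have "\<exists>S0. solid_resolving l V E S0 \<and> card S0 = solid_dim l V E"
    unfolding solid_dim_def by (rule LeastI_ex)
  then show ?thesis using that by blast
qed

text \<open>\<open>\<sigma>\<close> embeds \<open>W\<close> as a fibre of \<open>V\<close> along which, seen from \<open>s \<in> S\<close>, distances are those
  from \<open>\<pi> s\<close> in \<open>W\<close> up to the constant \<open>c s\<close>; so separations in the fibre project to \<open>W\<close>.\<close>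
lemma solid_resolving_image_of_fibre:
  assumes "finite V" "finite W" "solid_resolving l V EV S"
    and "\<sigma> ` W \<subseteq> V" "inj_on \<sigma> W" "\<pi> ` S \<subseteq> W"
    and shift: "\<And>s w. s \<in> S \<Longrightarrow> w \<in> W \<Longrightarrow> gdist EV s (\<sigma> w) = gdist EW (\<pi> s) w + c s"
  shows "solid_resolving l W EW (\<pi> ` S)"
  unfolding solid_resolving_iff_strictly_closer[OF assms(2)]
proof (intro conjI allI impI)
  show "\<pi> ` S \<subseteq> W" by fact
  fix X x assume X: "X \<subseteq> W \<and> X \<noteq> {} \<and> card X \<le> l \<and> x \<in> W \<and> x \<notin> X"
  then have "finite X" using assms(2) finite_subset by blast
  have "\<sigma> ` X \<subseteq> V" "\<sigma> ` X \<noteq> {}" "\<sigma> x \<in> V" using X assms(4) by auto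
  moreover have "card (\<sigma> ` X) \<le> l" using card_image_le[OF \<open>finite X\<close>, of \<sigma>] X by linarith
  moreover have "\<sigma> x \<notin> \<sigma> ` X" using X assms(5) by (metis inj_on_image_mem_iff)
  ultimately have "\<exists>s\<in>S. \<forall>y\<in>\<sigma> ` X. gdist EV s (\<sigma> x) < gdist EV s y"
    using assms(3) unfolding solid_resolving_iff_strictly_closer[OF assms(1)] by blast
  then obtain s where s: "s \<in> S" "\<forall>y\<in>X. gdist EV s (\<sigma> x) < gdist EV s (\<sigma> y)" by blast
  then have "\<forall>y\<in>X. gdist EW (\<pi> s) x < gdist EW (\<pi> s) y"
    using X shift by (metis add_less_cancel_right subsetD)
  then show "\<exists>t\<in>\<pi> ` S. \<forall>y\<in>X. gdist EW t x < gdist EW t y" using s(1) by blast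
qed

lemma solid_resolving_cart_fst:
  assumes "simple_graph VG EG" "connected_graph VG EG"
    and "simple_graph VH EH" "connected_graph VH EH"
    and S: "solid_resolving l (VG \<times> VH) (cart_edge EG EH) S"
  shows "solid_resolving l VG EG (fst ` S)"
proof -
  obtain v where v: "v \<in> VH" using assms(4) unfolding connected_graph_def by blast
  have "S \<subseteq> VG \<times> VH" using S unfolding solid_resolving_def by blast
  moreover have "finite VG" "finite VH" using assms(1,3) by (simp_all add: simple_graph_finite)
  ultimately show ?thesis
    using v by (intro solid_resolving_image_of_fibre[OF _ _ S, where \<sigma> = "\<lambda>x. (x, v)"
          and c = "\<lambda>s. gdist EH (snd s) v"])
      (auto simp: inj_on_def gdist_cart_edge[OF assms(1-4)])
qed

lemma solid_resolving_cart_snd: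
  assumes "simple_graph VG EG" "connected_graph VG EG"
    and "simple_graph VH EH" "connected_graph VH EH"
    and S: "solid_resolving l (VG \<times> VH) (cart_edge EG EH) S"
  shows "solid_resolving l VH EH (snd ` S)"
proof -
  obtain u where u: "u \<in> VG" using assms(2) unfolding connected_graph_def by blast
  have "S \<subseteq> VG \<times> VH" using S unfolding solid_resolving_def by blast
  moreover have "finite VG" "finite VH" using assms(1,3) by (simp_all add: simple_graph_finite)
  ultimately show ?thesis
    using u by (intro solid_resolving_image_of_fibre[OF _ _ S, where \<sigma> = "\<lambda>y. (u, y)"
          and c = "\<lambda>s. gdist EG (fst s) u"])
      (auto simp: inj_on_def gdist_cart_edge[OF assms(1-4)])
qed

lemma gdist_cart_edge_less:
  assumes "simple_graph VG EG" "connected_graph VG EG"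
    and "simple_graph VH EH" "connected_graph VH EH"
    and "t \<in> VG" "x \<in> VG" "a \<in> VG" "u \<in> VH" "y \<in> VH" "b \<in> VH" "(a, b) \<noteq> (x, y)"
    and "a \<noteq> x \<Longrightarrow> gdist EG t x < gdist EG t a" "b \<noteq> y \<Longrightarrow> gdist EH u y < gdist EH u b"
  shows "gdist (cart_edge EG EH) (t, u) (x, y) < gdist (cart_edge EG EH) (t, u) (a, b)"
proof -
  have "gdist EG t x + gdist EH u y < gdist EG t a + gdist EH u b"
    using assms(11-13) by fastforce
  then show ?thesis using gdist_cart_edge[OF assms(1-4)] assms(5-10) by simp
qed

lemma solid_resolving_cart_product:
  assumes G: "simple_graph VG EG" "connected_graph VG EG" "card VG \<ge> 2"
    and H: "simple_graph VH EH" "connected_graph VH EH" "card VH \<ge> 2"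
    and "l \<ge> 1" and T: "solid_resolving l VG EG T" and U: "solid_resolving l VH EH U"
  shows "solid_resolving l (VG \<times> VH) (cart_edge EG EH) (T \<times> U)"
proof -
  have fin: "finite VG" "finite VH" using G(1) H(1) by (simp_all add: simple_graph_finite)
  have "T \<noteq> {}" "U \<noteq> {}" using solid_resolving_nonempty assms by blast+
  have "T \<subseteq> VG" "U \<subseteq> VH" using T U unfolding solid_resolving_def by blast+
  show ?thesis
    unfolding solid_resolving_iff_strictly_closer[OF finite_cartesian_product[OF fin]]
  proof (intro conjI allI impI)
    show "T \<times> U \<subseteq> VG \<times> VH" using \<open>T \<subseteq> VG\<close> \<open>U \<subseteq> VH\<close> by blast
    fix X p assume X: "X \<subseteq> VG \<times> VH \<and> X \<noteq> {} \<and> card X \<le> l \<and> p \<in> VG \<times> VH \<and> p \<notin> X"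
    then obtain x y where p: "p = (x, y)" "x \<in> VG" "y \<in> VH" by blast
    have "finite X" using X finite_subset finite_cartesian_product[OF fin] by blast
    then have card: "card (fst ` X - {x}) \<le> l" "card (snd ` X - {y}) \<le> l"
      using card_Diff1_le[of "fst ` X" x] card_Diff1_le[of "snd ` X" y]
        card_image_le[of X fst] card_image_le[of X snd] X by linarith+
    have sub: "fst ` X - {x} \<subseteq> VG" "snd ` X - {y} \<subseteq> VH" using X by auto
    obtain t where t: "t \<in> T" "\<forall>a\<in>fst ` X - {x}. gdist EG t x < gdist EG t a"
      using solid_resolving_strictly_closer[OF fin(1) T \<open>T \<noteq> {}\<close> sub(1) card(1) p(2)] by blast
    obtain u where u: "u \<in> U" "\<forall>b\<in>snd ` X - {y}. gdist EH u y < gdist EH u b"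
      using solid_resolving_strictly_closer[OF fin(2) U \<open>U \<noteq> {}\<close> sub(2) card(2) p(3)] by blast
    have "gdist (cart_edge EG EH) (t, u) p < gdist (cart_edge EG EH) (t, u) q" if "q \<in> X" for q
    proof -
      obtain a b where q: "q = (a, b)" "a \<in> VG" "b \<in> VH" using X \<open>q \<in> X\<close> by blast
      have "a \<noteq> x \<Longrightarrow> gdist EG t x < gdist EG t a" using t(2) that q(1) by force
      moreover have "b \<noteq> y \<Longrightarrow> gdist EH u y < gdist EH u b" using u(2) that q(1) by force
      moreover have "t \<in> VG" "u \<in> VH" using t(1) u(1) \<open>T \<subseteq> VG\<close> \<open>U \<subseteq> VH\<close> by blast+
      ultimately show ?thesis
        using gdist_cart_edge_less[OF G(1,2) H(1,2)] X that p q by (metis mem_Sigma_iff)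
    qed
    then show "\<exists>s\<in>T \<times> U. \<forall>q\<in>X. gdist (cart_edge EG EH) s p < gdist (cart_edge EG EH) s q"
      using t(1) u(1) by blast
  qed
qed

theorem mainTheorem8:
  fixes VG :: "'a set" and EG :: "'a \<Rightarrow> 'a \<Rightarrow> bool"
    and VH :: "'b set" and EH :: "'b \<Rightarrow> 'b \<Rightarrow> bool"
    and l :: nat
  assumes "simple_graph VG EG" "connected_graph VG EG" "card VG \<ge> 2"
    and "simple_graph VH EH" "connected_graph VH EH" "card VH \<ge> 2"
    and "l \<ge> 1"
  shows "(\<forall>S. solid_resolving l (VG \<times> VH) (cart_edge EG EH) S \<longrightarrow>
            solid_resolving l VG EG (fst ` S) \<and> solid_resolving l VH EH (snd ` S))
       \<and> (\<forall>T U. solid_resolving l VG EG T \<and> solid_resolving l VH EH U \<longrightarrow>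
            solid_resolving l (VG \<times> VH) (cart_edge EG EH) (T \<times> U))
       \<and> max (solid_dim l VG EG) (solid_dim l VH EH) \<le> solid_dim l (VG \<times> VH) (cart_edge EG EH)
       \<and> solid_dim l (VG \<times> VH) (cart_edge EG EH) \<le> solid_dim l VG EG * solid_dim l VH EH"
proof -
  have projections: "solid_resolving l VG EG (fst ` S) \<and> solid_resolving l VH EH (snd ` S)"
    if "solid_resolving l (VG \<times> VH) (cart_edge EG EH) S" for S
    using solid_resolving_cart_fst solid_resolving_cart_snd assms(1,2,4,5) that by blast
  have product: "solid_resolving l (VG \<times> VH) (cart_edge EG EH) (T \<times> U)"
    if "solid_resolving l VG EG T" "solid_resolving l VH EH U" for T U
    using solid_resolving_cart_product assms that by blast
  have fin: "finite VG" "finite VH" using assms(1,4) by (simp_all add: simple_graph_finite)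
  obtain T where T: "solid_resolving l VG EG T" "card T = solid_dim l VG EG"
    using solid_dim_attained[OF solid_resolving_vertex_set[OF fin(1) assms(2)]] by blast
  obtain U where U: "solid_resolving l VH EH U" "card U = solid_dim l VH EH"
    using solid_dim_attained[OF solid_resolving_vertex_set[OF fin(2) assms(5)]] by blast
  obtain S where S: "solid_resolving l (VG \<times> VH) (cart_edge EG EH) S"
    "card S = solid_dim l (VG \<times> VH) (cart_edge EG EH)"
    using solid_dim_attained product[OF T(1) U(1)] by blast
  have "S \<subseteq> VG \<times> VH" using S(1) unfolding solid_resolving_def by blast
  then have "finite S" using fin finite_subset by blast
  then have "max (solid_dim l VG EG) (solid_dim l VH EH) \<le> card S"
    using solid_dim_le_card_image[of l VG EG fst S] solid_dim_le_card_image[of l VH EH snd S]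
      projections[OF S(1)] by simp
  moreover have "card (T \<times> U) = solid_dim l VG EG * solid_dim l VH EH"
    using T(2) U(2) by (simp add: card_cartesian_product)
  ultimately show ?thesis
    using projections product solid_dim_le_card[OF product[OF T(1) U(1)]] S(2) by auto
qed

end
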